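(* Let $\Omega = \{-1\} \cup [0,\infty)$, let $E$ be the Banach space of all bounded continuous real functions on $\Omega$ with the supremum norm, and let $$C = \{ x \in E : 0 \le x(u) \le 1 \text{ for all } u \in \Omega,\ |x(u_1)-x(u_2)| \le |u_1-u_2| \text{ for all } u_1,u_2 \in [0,\infty)\}.$$ For $x \in C$ and $v \ge 0$ put $\alpha_x(v) = \sup\{ x(s) : s \in \{-1\}\cup[v,\infty)\}$. For $t \in [0,1]$ and $x \in C$ define $T(t)x$ on $\Omega$ by $$(T(t)x)(u) = \begin{cases} x(-1), & u=-1,\\ x(u-t), & u \ge t,\\ x(0)-t+u, & 0\le u\le t \text{ and } 1-\alpha_x(1-t+u) \le x(0)-t+u,\\ x(0)+t-u, & 0\le u\le t \text{ and } 1-\alpha_x(1-t+u) \ge x(0)+t-u,\\ 1-\alpha_x(1-t+u), & 0 \le u \le t \text{ and } |1-\alpha_x(1-t+u)-x(0)| \le t-u. \end{cases}$$ For $t > 1$, write $t = m/2 + t'$ with $m \in \mathbb N$ and $t' \in [0,1/2)$, and define $T(t) = T(1/2)^m \circ T(t')$. Then $C$ is a closed convex subset of $E$, $\{T(t): t\ge 0\}$ is a one-parameter nonexpansive semigroup on $C$, the zero function $0 \in C$ is not a common fixed point of $\{T(t) : t \ge 0\}$, and $$\lim_{t\to\infty} \left\| \frac{1}{t}\int_0^t T(s)0\, ds - 0 \right\| = 0.$$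
   Context: A family $\{T(t): t\ge 0\}$ of mappings on a subset $C$ of a Banach space is a one-parameter nonexpansive semigroup on $C$ if: each $T(t)$ is nonexpansive on $C$ ($\|T(t)x-T(t)y\|\le\|x-y\|$ for all $x,y\in C$); $T(0)x=x$ for all $x\in C$; $T(s+t)=T(s)\circ T(t)$ for all $s,t\ge 0$; and for each $x\in C$ the map $t\mapsto T(t)x$ is continuous. A common fixed point is a point $z\in C$ with $T(t)z=z$ for all $t\ge 0$. $\mathbb N$ denotes the set of positive integers. *)

theory Defs
  imports "HOL-Analysis.Analysis"
begin

typedef omega = "{-1::real} \<union> {0..}"
  by auto

instantiation omega :: metric_space
begin

definition dist_omega :: "omega \<Rightarrow> omega \<Rightarrow> real"
  where "dist_omega x y = dist (Rep_omega x) (Rep_omega y)"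

definition uniformity_omega :: "(omega \<times> omega) filter"
  where "uniformity_omega = (INF e\<in>{0<..}. principal {(x, y). dist x y < e})"

definition open_omega :: "omega set \<Rightarrow> bool"
  where "open_omega U \<longleftrightarrow> (\<forall>x\<in>U. \<forall>\<^sub>F (x', y) in uniformity. x' = x \<longrightarrow> y \<in> U)"

instance
proof
  fix x y z :: omega
  show "dist x y = 0 \<longleftrightarrow> x = y"
    by (simp add: dist_omega_def Rep_omega_inject)
  show "dist x y \<le> dist x z + dist y z"
    unfolding dist_omega_def by (rule dist_triangle2)
qed (simp_all add: uniformity_omega_def open_omega_def)

end

text \<open>The point u of Omega (meaningful for u = -1 or u \<ge> 0).\<close>
definition pt :: "real \<Rightarrow> omega" where "pt u = Abs_omega u"

type_synonym E = "(omega, real) bcontfun"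

definition Cset :: "E set" where
  "Cset = {x. (\<forall>u. 0 \<le> apply_bcontfun x u \<and> apply_bcontfun x u \<le> 1) \<and>
              (\<forall>u1\<ge>0. \<forall>u2\<ge>0. \<bar>apply_bcontfun x (pt u1) - apply_bcontfun x (pt u2)\<bar> \<le> \<bar>u1 - u2\<bar>)}"

definition alpha :: "E \<Rightarrow> real \<Rightarrow> real" where
  "alpha x v = (SUP s \<in> {s. Rep_omega s = -1 \<or> Rep_omega s \<ge> v}. apply_bcontfun x s)"

text \<open>T(t) for t in [0,1], as in the paper (the three cases for 0 \<le> u \<le> t are
  written as the clamp of 1 - alpha_x(1-t+u) to [x(0)-t+u, x(0)+t-u]).\<close>
definition Tbase_fun :: "real \<Rightarrow> E \<Rightarrow> omega \<Rightarrow> real" where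
  "Tbase_fun t x w =
     (let u = Rep_omega w; x0 = apply_bcontfun x (pt 0); a = 1 - alpha x (1 - t + u) in
      if u = -1 then apply_bcontfun x (pt (-1))
      else if u \<ge> t then apply_bcontfun x (pt (u - t))
      else if a \<le> x0 - t + u then x0 - t + u
      else if a \<ge> x0 + t - u then x0 + t - u
      else a)"

definition Tbase :: "real \<Rightarrow> E \<Rightarrow> E" where
  "Tbase t x = Bcontfun (Tbase_fun t x)"

definition Tsg :: "real \<Rightarrow> E \<Rightarrow> E" where
  "Tsg t = (if t \<le> 1 then Tbase t
            else (Tbase (1/2) ^^ nat \<lfloor>2 * t\<rfloor>) \<circ> Tbase (t - real_of_int \<lfloor>2 * t\<rfloor> / 2))"

definition nonexp_semigroup :: "'a::real_normed_vector set \<Rightarrow> (real \<Rightarrow> 'a \<Rightarrow> 'a) \<Rightarrow> bool" where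
  "nonexp_semigroup C T \<longleftrightarrow>
     (\<forall>t\<ge>0. \<forall>x\<in>C. T t x \<in> C) \<and>
     (\<forall>t\<ge>0. \<forall>x\<in>C. \<forall>y\<in>C. norm (T t x - T t y) \<le> norm (x - y)) \<and>
     (\<forall>x\<in>C. T 0 x = x) \<and>
     (\<forall>s\<ge>0. \<forall>t\<ge>0. \<forall>x\<in>C. T (s + t) x = T s (T t x)) \<and>
     (\<forall>x\<in>C. continuous_on {0..} (\<lambda>t. T t x))"

definition common_fixed_point :: "'a set \<Rightarrow> (real \<Rightarrow> 'a \<Rightarrow> 'a) \<Rightarrow> 'a \<Rightarrow> bool" where
  "common_fixed_point C T z \<longleftrightarrow> z \<in> C \<and> (\<forall>t\<ge>0. T t z = z)"

end

theory Submission
  imports Defs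
begin

(* For 0 <= t <= 1, T(t) translates x to the right by t on [0,inf) and fills the gap [0,t]
   by clamping 1 - alpha_x(1-t+u) to the interval of radius t-u around x(0). Clamping is
   1-Lipschitz in all of its data, so T(t) maps C into C, is nonexpansive and moves x by at
   most t. The tail suprema of T(t)x are those of x shifted by t, so two successive clamps
   merge into one, which gives T(s)T(t) = T(s+t) for s+t <= 1; any such local semigroup
   extends to all t >= 0 by steps of length 1/2. The orbit of 0 is a tent of height 1 with
   apex at t-1 moving right at unit speed: it never returns to 0, yet at every point its
   integral over [0,t] is at most 2, so the Cesaro means tend to 0. *)

section \<open>Extending a local semigroup by steps of length 1/2\<close>

definition semigroup_extension :: "(real \<Rightarrow> 'a \<Rightarrow> 'a) \<Rightarrow> real \<Rightarrow> 'a \<Rightarrow> 'a" where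
  "semigroup_extension S t = (S (1/2) ^^ nat \<lfloor>2 * t\<rfloor>) \<circ> S (t - of_int \<lfloor>2 * t\<rfloor> / 2)"

lemma floor_double_remainder:
  fixes t :: real
  assumes "0 \<le> t"
  shows "real (nat \<lfloor>2 * t\<rfloor>) = of_int \<lfloor>2 * t\<rfloor>" "0 \<le> t - of_int \<lfloor>2 * t\<rfloor> / 2"
    "t - of_int \<lfloor>2 * t\<rfloor> / 2 < 1/2"
proof -
  show "real (nat \<lfloor>2 * t\<rfloor>) = of_int \<lfloor>2 * t\<rfloor>" using assms by simp
  show "0 \<le> t - of_int \<lfloor>2 * t\<rfloor> / 2" using of_int_floor_le[of "2 * t"] by linarith
  show "t - of_int \<lfloor>2 * t\<rfloor> / 2 < 1/2" using real_of_int_floor_add_one_gt[of "2 * t"] by linarith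
qed

lemma semigroup_extension_orbit:
  assumes step: "\<And>s h. 0 \<le> s \<Longrightarrow> 0 \<le> h \<Longrightarrow> h \<le> 1/2 \<Longrightarrow> S h (\<gamma> s) = \<gamma> (s + h)"
    and "0 \<le> t"
  shows "semigroup_extension S t (\<gamma> 0) = \<gamma> t"
proof -
  define r where "r = t - of_int \<lfloor>2 * t\<rfloor> / 2"
  have r: "0 \<le> r" "r < 1/2" using floor_double_remainder[OF \<open>0 \<le> t\<close>] by (simp_all add: r_def)
  have "(S (1/2) ^^ m) (\<gamma> r) = \<gamma> (r + real m / 2)" for m
  proof (induction m)
    case (Suc m)
    then show ?case using step[of "r + real m / 2" "1/2"] r by (simp add: add_divide_distrib add_ac)
  qed simp
  then show ?thesis
    using step[of 0 r] r floor_double_remainder[OF \<open>0 \<le> t\<close>]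
    by (simp add: semigroup_extension_def r_def)
qed

locale local_semigroup =
  fixes C :: "'a set" and S :: "real \<Rightarrow> 'a \<Rightarrow> 'a"
  assumes maps_to: "x \<in> C \<Longrightarrow> 0 \<le> t \<Longrightarrow> t \<le> 1 \<Longrightarrow> S t x \<in> C"
    and local_add: "x \<in> C \<Longrightarrow> 0 \<le> s \<Longrightarrow> 0 \<le> t \<Longrightarrow> s + t \<le> 1 \<Longrightarrow> S s (S t x) = S (s + t) x"
begin

lemma half_power_in: "x \<in> C \<Longrightarrow> (S (1/2) ^^ m) x \<in> C"
  by (induction m) (auto intro: maps_to)

lemma half_power_commute:
  assumes "x \<in> C" "0 \<le> h" "h \<le> 1/2"
  shows "S h ((S (1/2) ^^ m) x) = (S (1/2) ^^ m) (S h x)"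
proof (induction m)
  case (Suc m)
  have "S h (S (1/2) y) = S (1/2) (S h y)" if "y \<in> C" for y
    using local_add[OF that, of h "1/2"] local_add[OF that, of "1/2" h] assms by (simp add: add.commute)
  then show ?case using Suc half_power_in[OF assms(1)] by simp
qed simp

lemma extension_in: "x \<in> C \<Longrightarrow> 0 \<le> t \<Longrightarrow> semigroup_extension S t x \<in> C"
  using floor_double_remainder[of t] by (simp add: semigroup_extension_def half_power_in maps_to)

lemma extension_eq:
  assumes x: "x \<in> C" and t: "0 \<le> t" "t \<le> 1"
  shows "semigroup_extension S t x = S t x"
proof -
  have "\<lfloor>2 * t\<rfloor> \<in> {0, 1, 2}" using t by (auto simp: floor_eq_iff)
  then consider "\<lfloor>2 * t\<rfloor> = 0" | "\<lfloor>2 * t\<rfloor> = 1" | "\<lfloor>2 * t\<rfloor> = 2" by blast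
  then show ?thesis
  proof cases
    case 1 then show ?thesis by (simp add: semigroup_extension_def)
  next
    case 2
    then have "1/2 \<le> t" by (simp add: floor_eq_iff)
    then show ?thesis using 2 local_add[OF x, of "1/2" "t - 1/2"] t by (simp add: semigroup_extension_def)
  next
    case 3
    then have "t = 1" using t by linarith
    \<comment> \<open>\<open>S 0\<close> need not be the identity; \<open>local_add\<close> absorbs it\<close>
    then show ?thesis
      using 3 local_add[OF x, of "1/2" 0] local_add[OF x, of "1/2" "1/2"]
        local_add[OF maps_to[OF x], of "1/2" 0 "1/2"]
      by (simp add: semigroup_extension_def numeral_2_eq_2)
  qed
qed

lemma extension_add_small:
  assumes x: "x \<in> C" and t: "0 \<le> t" and h: "0 \<le> h" "h \<le> 1/2"
  shows "semigroup_extension S (t + h) x = S h (semigroup_extension S t x)"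
proof -
  define k where "k = \<lfloor>2 * t\<rfloor>"
  define r where "r = t - of_int k / 2"
  have r: "0 \<le> r" "r < 1/2" using floor_double_remainder[OF t] by (simp_all add: r_def k_def)
  have "0 \<le> k" using t by (simp add: k_def)
  have "S h (semigroup_extension S t x) = (S (1/2) ^^ nat k) (S (r + h) x)"
    using half_power_commute[OF maps_to[OF x] h, of r] local_add[OF x, of h r] r h
    by (simp add: semigroup_extension_def k_def r_def add.commute)
  also have "\<dots> = semigroup_extension S (t + h) x"
  proof (cases "r + h < 1/2")
    case True
    then have "\<lfloor>2 * (t + h)\<rfloor> = k" using r h by (simp add: floor_eq_iff r_def algebra_simps)
    then show ?thesis by (simp add: semigroup_extension_def r_def diff_add_eq)
  next
    case False
    then have fl: "\<lfloor>2 * (t + h)\<rfloor> = k + 1" using r h by (simp add: floor_eq_iff r_def algebra_simps)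
    have e: "t + h - of_int (k + 1) / 2 = r + h - 1/2" by (simp add: r_def field_simps)
    have "nat (k + 1) = Suc (nat k)" using \<open>0 \<le> k\<close> by simp
    then have "semigroup_extension S (t + h) x = (S (1/2) ^^ nat k) (S (1/2) (S (r + h - 1/2) x))"
      unfolding semigroup_extension_def fl e by (simp only: funpow_Suc_right o_apply)
    also have "S (1/2) (S (r + h - 1/2) x) = S (r + h) x"
      using local_add[OF x, of "1/2" "r + h - 1/2"] False r h by simp
    finally show ?thesis by (rule sym)
  qed
  finally show ?thesis ..
qed

lemma extension_add:
  assumes x: "x \<in> C" and s: "0 \<le> s" and t: "0 \<le> t"
  shows "semigroup_extension S (s + t) x = semigroup_extension S s (semigroup_extension S t x)"
proof -
  let ?y = "semigroup_extension S t x"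
  define r where "r = s - of_int \<lfloor>2 * s\<rfloor> / 2"
  have r: "0 \<le> r" "r < 1/2" using floor_double_remainder[OF s] by (simp_all add: r_def)
  have "semigroup_extension S (t + r + real m / 2) x = (S (1/2) ^^ m) (S r ?y)" for m
  proof (induction m)
    case 0 then show ?case using extension_add_small[OF x t, of r] r by simp
  next
    case (Suc m)
    have "semigroup_extension S (t + r + real (Suc m) / 2) x
        = semigroup_extension S ((t + r + real m / 2) + 1/2) x"
      by (simp add: algebra_simps add_divide_distrib)
    also have "\<dots> = S (1/2) (semigroup_extension S (t + r + real m / 2) x)"
      using extension_add_small[OF x, of "t + r + real m / 2" "1/2"] t r by simp
    finally show ?case using Suc by simp
  qed
  from this[of "nat \<lfloor>2 * s\<rfloor>"] show ?thesis
    using floor_double_remainder[OF s] by (simp add: semigroup_extension_def r_def add.commute)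
qed

end

(* The displacement bound makes the extension 1-Lipschitz in t, hence continuous,
   and forces S 0 to be the identity on C. *)
locale nonexpansive_local_semigroup = local_semigroup C S
  for C :: "'a::real_normed_vector set" and S +
  assumes nonexpansive: "x \<in> C \<Longrightarrow> y \<in> C \<Longrightarrow> 0 \<le> t \<Longrightarrow> t \<le> 1 \<Longrightarrow> norm (S t x - S t y) \<le> norm (x - y)"
    and norm_diff_le: "x \<in> C \<Longrightarrow> 0 \<le> t \<Longrightarrow> t \<le> 1 \<Longrightarrow> norm (S t x - x) \<le> t"
begin

lemma extension_nonexpansive:
  assumes x: "x \<in> C" and y: "y \<in> C" and t: "0 \<le> t"
  shows "norm (semigroup_extension S t x - semigroup_extension S t y) \<le> norm (x - y)"
proof -
  have powers: "norm ((S (1/2) ^^ m) x' - (S (1/2) ^^ m) y') \<le> norm (x' - y')"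
    if "x' \<in> C" "y' \<in> C" for m x' y'
  proof (induction m)
    case (Suc m)
    have "norm ((S (1/2) ^^ Suc m) x' - (S (1/2) ^^ Suc m) y')
        \<le> norm ((S (1/2) ^^ m) x' - (S (1/2) ^^ m) y')"
      using nonexpansive[OF half_power_in[OF that(1)] half_power_in[OF that(2)], of "1/2" m] by simp
    then show ?case using Suc.IH by linarith
  qed simp
  define r where "r = t - of_int \<lfloor>2 * t\<rfloor> / 2"
  have r: "0 \<le> r" "r \<le> 1" using floor_double_remainder[OF t] by (simp_all add: r_def)
  have "norm (semigroup_extension S t x - semigroup_extension S t y) \<le> norm (S r x - S r y)"
    unfolding semigroup_extension_def r_def[symmetric] o_apply
    using powers maps_to x y r by blast
  also have "\<dots> \<le> norm (x - y)" using nonexpansive[OF x y r] .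
  finally show ?thesis .
qed

lemma extension_norm_diff_le:
  assumes x: "x \<in> C" and t: "0 \<le> t"
  shows "norm (semigroup_extension S t x - x) \<le> t"
proof -
  have powers: "norm ((S (1/2) ^^ m) y - y) \<le> real m / 2" if "y \<in> C" for m y
  proof (induction m)
    case (Suc m)
    have "norm ((S (1/2) ^^ Suc m) y - y) \<le> 1/2 + real m / 2"
      using norm_diff_le[OF half_power_in[OF that], of "1/2" m] Suc.IH
      by (auto intro: norm_diff_triangle_le)
    then show ?case by (simp add: add_divide_distrib)
  qed simp
  define r where "r = t - of_int \<lfloor>2 * t\<rfloor> / 2"
  have r: "0 \<le> r" "r \<le> 1" using floor_double_remainder[OF t] by (simp_all add: r_def)
  have "norm (semigroup_extension S t x - x) \<le> real (nat \<lfloor>2 * t\<rfloor>) / 2 + r"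
    unfolding semigroup_extension_def r_def[symmetric] o_apply
    using powers[OF maps_to[OF x r]] norm_diff_le[OF x r] by (rule norm_diff_triangle_le)
  also have "\<dots> = t" using floor_double_remainder[OF t] by (simp add: r_def)
  finally show ?thesis .
qed

lemma extension_lipschitz: "x \<in> C \<Longrightarrow> 1-lipschitz_on {0..} (\<lambda>t. semigroup_extension S t x)"
proof (rule lipschitz_on_leI)
  fix a b :: real assume x: "x \<in> C" and "a \<in> {0..}" "b \<in> {0..}" "a \<le> b"
  then have "semigroup_extension S b x = semigroup_extension S (b - a) (semigroup_extension S a x)"
    using extension_add[OF x, of "b - a" a] by simp
  then show "dist (semigroup_extension S a x) (semigroup_extension S b x) \<le> 1 * dist a b"
    using extension_norm_diff_le[OF extension_in[OF x], of a "b - a"] \<open>a \<in> {0..}\<close> \<open>a \<le> b\<close>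
    by (simp add: dist_norm norm_minus_commute dist_real_def)
qed simp

lemma nonexp_semigroup_extension: "nonexp_semigroup C (semigroup_extension S)"
  unfolding nonexp_semigroup_def
proof (intro conjI allI impI ballI)
  fix x assume x: "x \<in> C"
  show "semigroup_extension S 0 x = x"
    using extension_norm_diff_le[OF x order_refl] by simp
  show "continuous_on {0..} (\<lambda>t. semigroup_extension S t x)"
    by (rule lipschitz_on_continuous_on[OF extension_lipschitz[OF x]])
qed (simp_all add: extension_in extension_nonexpansive extension_add)

end

section \<open>The set C\<close>

lemma Rep_omega_pt_nonneg [simp]: "0 \<le> u \<Longrightarrow> Rep_omega (pt u) = u"
  by (simp add: pt_def Abs_omega_inverse)

lemma Rep_omega_pt_minus_one [simp]: "Rep_omega (pt (-1)) = -1"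
  by (simp add: pt_def Abs_omega_inverse)

lemma pt_Rep_omega [simp]: "pt (Rep_omega w) = w"
  by (simp add: pt_def Rep_omega_inverse)

lemma omega_cases [case_names minus_one nonneg]:
  obtains "w = pt (-1)" | u where "0 \<le> u" "w = pt u"
  using Rep_omega[of w] by (metis Un_iff atLeast_iff pt_Rep_omega singletonD)

lemma dist_omega_eq: "dist w w' = \<bar>Rep_omega w - Rep_omega w'\<bar>"
  by (simp add: dist_omega_def dist_real_def)

lemma lipschitz_on_atLeast_glue:
  fixes f :: "real \<Rightarrow> 'a::metric_space"
  assumes left: "L-lipschitz_on {a..b} f" and right: "L-lipschitz_on {b..} f"
  shows "L-lipschitz_on {a..} f"
proof (rule lipschitz_on_leI)
  fix x y assume x: "x \<in> {a..}" and y: "y \<in> {a..}" and "x \<le> y"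
  consider "y \<le> b" | "b \<le> x" | "x \<le> b" "b \<le> y" by linarith
  then show "dist (f x) (f y) \<le> L * dist x y"
  proof cases
    case 1 then show ?thesis using lipschitz_onD[OF left] x y \<open>x \<le> y\<close> by simp
  next
    case 2 then show ?thesis using lipschitz_onD[OF right] \<open>x \<le> y\<close> by simp
  next
    case 3
    have "dist (f x) (f y) \<le> dist (f x) (f b) + dist (f b) (f y)"
      by (rule dist_triangle)
    also have "\<dots> \<le> L * dist x b + L * dist b y"
      using lipschitz_onD[OF left, of x b] lipschitz_onD[OF right, of b y] x 3 by simp
    also have "\<dots> = L * dist x y"
      using 3 by (simp add: dist_real_def distrib_left[symmetric])
    finally show ?thesis .
  qed
qed (rule lipschitz_on_nonneg[OF right])

definition C_function :: "(omega \<Rightarrow> real) \<Rightarrow> bool" where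
  "C_function f \<longleftrightarrow> range f \<subseteq> {0..1} \<and> 1-lipschitz_on {0..} (f \<circ> pt)"

lemma C_function_dist_le:
  assumes f: "C_function f" shows "dist (f w) (f w') \<le> dist w w'"
proof -
  have "f w \<in> {0..1}" "f w' \<in> {0..1}" using f by (auto simp: C_function_def image_subset_iff)
  then have "dist (f w) (f w') \<le> 1" by (auto simp: dist_real_def abs_le_iff)
  then show ?thesis
  proof (cases w rule: omega_cases; cases w' rule: omega_cases)
    fix u u' assume "0 \<le> u" "w = pt u" "0 \<le> u'" "w' = pt u'"
    then show ?thesis
      using f lipschitz_onD[of 1 "{0..}" "f \<circ> pt" u u'] by (simp add: C_function_def dist_omega_eq dist_real_def)
  qed (auto simp: dist_omega_eq)
qed

lemma C_function_bcontfun: "C_function f \<Longrightarrow> f \<in> bcontfun"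
  by (rule bcontfun_normI[where b = 1], rule lipschitz_on_continuous_on[where L = 1],
      auto intro!: lipschitz_onI C_function_dist_le simp: C_function_def image_subset_iff)

lemma apply_Bcontfun_C_function: "C_function f \<Longrightarrow> apply_bcontfun (Bcontfun f) = f"
  by (simp add: Bcontfun_inverse C_function_bcontfun)

lemma Cset_iff_C_function: "x \<in> Cset \<longleftrightarrow> C_function (apply_bcontfun x)"
  by (auto simp: Cset_def C_function_def lipschitz_on_def dist_real_def image_subset_iff)

lemma Bcontfun_in_Cset: "C_function f \<Longrightarrow> Bcontfun f \<in> Cset"
  by (simp add: Cset_iff_C_function apply_Bcontfun_C_function)

lemma Cset_bounds:
  fixes x :: E
  shows "x \<in> Cset \<Longrightarrow> 0 \<le> x w \<and> x w \<le> 1"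
  by (simp add: Cset_def)

lemma Cset_lipschitz:
  fixes x :: E
  shows "x \<in> Cset \<Longrightarrow> 0 \<le> u \<Longrightarrow> 0 \<le> u' \<Longrightarrow> \<bar>x (pt u) - x (pt u')\<bar> \<le> \<bar>u - u'\<bar>"
  by (simp add: Cset_def)

lemma bounded_linear_apply_bcontfun:
  "bounded_linear (\<lambda>f::('a::topological_space, 'b::real_normed_vector) bcontfun. apply_bcontfun f a)"
  by (rule bounded_linear_intro[where K = 1]) (simp_all add: norm_bounded)

instance bcontfun :: (metric_space, banach) banach ..

lemma apply_integral_bcontfun:
  fixes f :: "real \<Rightarrow> ('a::topological_space, 'b::banach) bcontfun"
  assumes "f integrable_on S"
  shows "integral S f a = integral S (\<lambda>s. f s a)"
  using integral_linear[OF assms bounded_linear_apply_bcontfun] by (simp add: o_def)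

lemma Cset_eq_Inter:
  "Cset = (\<Inter>w. (\<lambda>x::E. x w) -` {0..1}) \<inter>
     (\<Inter>u\<in>{0..}. \<Inter>u'\<in>{0..}. (\<lambda>x::E. x (pt u) - x (pt u')) -` cball 0 \<bar>u - u'\<bar>)"
  by (auto simp: Cset_def dist_0_norm)

lemma closed_Cset: "closed Cset"
  unfolding Cset_eq_Inter
  by (intro closed_Int closed_INT ballI continuous_closed_vimage closed_atLeastAtMost closed_cball
      linear_continuous_at bounded_linear_sub bounded_linear_apply_bcontfun)

lemma convex_Cset: "convex Cset"
  unfolding Cset_eq_Inter
  by (intro convex_Int convex_INT convex_linear_vimage convex_real_interval convex_cball
      bounded_linear.linear[OF bounded_linear_sub] bounded_linear.linear bounded_linear_apply_bcontfun)

lemma zero_in_Cset: "0 \<in> Cset"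
  by (simp add: Cset_def)

section \<open>Tail suprema\<close>

lemma alpha_upper:
  fixes x :: E
  assumes "x \<in> Cset" "Rep_omega s = -1 \<or> v \<le> Rep_omega s"
  shows "x s \<le> alpha x v"
  unfolding alpha_def
  by (rule cSUP_upper) (use assms Cset_bounds in \<open>auto intro!: bdd_aboveI2[where M = 1]\<close>)

lemma alpha_least:
  fixes x :: E
  assumes "\<And>s. Rep_omega s = -1 \<or> v \<le> Rep_omega s \<Longrightarrow> x s \<le> M"
  shows "alpha x v \<le> M"
  unfolding alpha_def
  by (rule cSUP_least) (use assms Rep_omega_pt_minus_one in blast)+

lemma alpha_bounds: "x \<in> Cset \<Longrightarrow> 0 \<le> alpha x v \<and> alpha x v \<le> 1"
  using alpha_upper[of x "pt (-1)" v] alpha_least[of v x 1] Cset_bounds[of x]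
  by (metis Rep_omega_pt_minus_one order_trans)

lemma alpha_antimono: "x \<in> Cset \<Longrightarrow> v \<le> v' \<Longrightarrow> alpha x v' \<le> alpha x v"
  by (rule alpha_least) (auto intro: alpha_upper)

lemma alpha_lipschitz:
  assumes x: "x \<in> Cset" and "0 \<le> v" "0 \<le> v'"
  shows "\<bar>alpha x v - alpha x v'\<bar> \<le> \<bar>v - v'\<bar>"
proof -
  have "alpha x a \<le> alpha x b + (b - a)" if "0 \<le> a" "a \<le> b" for a b
  proof (rule alpha_least)
    fix s assume s: "Rep_omega s = -1 \<or> a \<le> Rep_omega s"
    show "x s \<le> alpha x b + (b - a)"
    proof (cases "Rep_omega s = -1 \<or> b \<le> Rep_omega s")
      case True then show ?thesis using alpha_upper[OF x True] that by linarith
    next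
      case False
      then have "a \<le> Rep_omega s" "Rep_omega s < b" using s by auto
      moreover have "x (pt b) \<le> alpha x b" using alpha_upper[OF x, of "pt b" b] that by simp
      ultimately show ?thesis
        using Cset_lipschitz[OF x, of "Rep_omega s" b] that by simp
    qed
  qed
  from this[of v v'] this[of v' v] show ?thesis
    using alpha_antimono[OF x, of v v'] alpha_antimono[OF x, of v' v] assms
    by (cases "v \<le> v'") (simp_all add: abs_le_iff)
qed

lemma alpha_diff_le_norm:
  fixes x y :: E
  assumes "x \<in> Cset" "y \<in> Cset"
  shows "\<bar>alpha x v - alpha y v\<bar> \<le> norm (x - y)"
proof -
  have "alpha a v \<le> alpha b v + norm (a - b)" if "b \<in> Cset" for a b :: E
  proof (rule alpha_least)
    fix s assume "Rep_omega s = -1 \<or> v \<le> Rep_omega s"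
    then have "b s \<le> alpha b v" by (rule alpha_upper[OF that])
    moreover have "a s - b s \<le> norm (a - b)"
      using norm_bounded[of "a - b" s] by simp
    ultimately show "a s \<le> alpha b v + norm (a - b)" by linarith
  qed
  from this[OF assms(2), of x] this[OF assms(1), of y] show ?thesis
    by (simp add: norm_minus_commute)
qed

section \<open>The operators T(t) for 0 \<le> t \<le> 1 and their extension\<close>

definition clip :: "real \<Rightarrow> real \<Rightarrow> real \<Rightarrow> real" where
  "clip l h a = max l (min h a)"

lemma clip_abs_diff_le:
  "\<bar>l - l'\<bar> \<le> d \<Longrightarrow> \<bar>h - h'\<bar> \<le> d \<Longrightarrow> \<bar>a - a'\<bar> \<le> d \<Longrightarrow> \<bar>clip l h a - clip l' h' a'\<bar> \<le> d"
  unfolding clip_def abs_le_iff by linarith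

lemma clip_clip:
  assumes "0 \<le> t" "0 \<le> r" "a \<le> b" "b - a \<le> r"
  shows "clip (clip (c - t) (c + t) b - r) (clip (c - t) (c + t) b + r) a = clip (c - t - r) (c + t + r) a"
  using assms unfolding clip_def by (smt (verit))

lemma Tbase_fun_minus_one: "Tbase_fun t x (pt (-1)) = x (pt (-1))"
  by (simp add: Tbase_fun_def)

lemma Tbase_fun_shift: "0 \<le> t \<Longrightarrow> t \<le> u \<Longrightarrow> Tbase_fun t x (pt u) = x (pt (u - t))"
  by (simp add: Tbase_fun_def)

lemma Tbase_fun_clip:
  assumes "0 \<le> u" "u \<le> t"
  shows "Tbase_fun t x (pt u) = clip (x (pt 0) - (t - u)) (x (pt 0) + (t - u)) (1 - alpha x (1 - t + u))"
  using assms by (cases "u = t") (auto simp: Tbase_fun_def Let_def clip_def)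

lemma C_function_Tbase_fun:
  assumes x: "x \<in> Cset" and t: "0 \<le> t" "t \<le> 1"
  shows "C_function (Tbase_fun t x)"
  unfolding C_function_def
proof
  show "range (Tbase_fun t x) \<subseteq> {0..1}"
  proof clarify
    fix w
    show "Tbase_fun t x w \<in> {0..1}"
    proof (cases w rule: omega_cases)
      case minus_one then show ?thesis using Cset_bounds[OF x] by (simp add: Tbase_fun_minus_one)
    next
      case (nonneg u)
      show ?thesis
      proof (cases "t \<le> u")
        case True then show ?thesis using nonneg t Cset_bounds[OF x] by (simp add: Tbase_fun_shift)
      next
        case False
        then show ?thesis
          using nonneg Cset_bounds[OF x, of "pt 0"] alpha_bounds[OF x, of "1 - t + u"]
          by (auto simp: Tbase_fun_clip clip_def max_def min_def)
      qed
    qed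
  qed
  have "1-lipschitz_on {0..t} (Tbase_fun t x \<circ> pt)"
  proof (rule lipschitz_onI)
    fix a b assume ab: "a \<in> {0..t}" "b \<in> {0..t}"
    have "\<bar>alpha x (1 - t + a) - alpha x (1 - t + b)\<bar> \<le> \<bar>a - b\<bar>"
      using alpha_lipschitz[OF x, of "1 - t + a" "1 - t + b"] ab t by simp
    then show "dist ((Tbase_fun t x \<circ> pt) a) ((Tbase_fun t x \<circ> pt) b) \<le> 1 * dist a b"
      using ab by (simp add: Tbase_fun_clip dist_real_def clip_abs_diff_le)
  qed simp
  moreover have "1-lipschitz_on {t..} (Tbase_fun t x \<circ> pt)"
  proof (rule lipschitz_onI)
    fix a b assume "a \<in> {t..}" "b \<in> {t..}"
    then show "dist ((Tbase_fun t x \<circ> pt) a) ((Tbase_fun t x \<circ> pt) b) \<le> 1 * dist a b"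
      using Cset_lipschitz[OF x, of "a - t" "b - t"] t by (simp add: Tbase_fun_shift dist_real_def)
  qed simp
  ultimately show "1-lipschitz_on {0..} (Tbase_fun t x \<circ> pt)"
    by (rule lipschitz_on_atLeast_glue)
qed

lemma apply_Tbase: "x \<in> Cset \<Longrightarrow> 0 \<le> t \<Longrightarrow> t \<le> 1 \<Longrightarrow> apply_bcontfun (Tbase t x) = Tbase_fun t x"
  unfolding Tbase_def by (rule apply_Bcontfun_C_function[OF C_function_Tbase_fun])

lemma Tbase_in_Cset: "x \<in> Cset \<Longrightarrow> 0 \<le> t \<Longrightarrow> t \<le> 1 \<Longrightarrow> Tbase t x \<in> Cset"
  unfolding Tbase_def by (rule Bcontfun_in_Cset[OF C_function_Tbase_fun])

lemma alpha_Tbase: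
  assumes x: "x \<in> Cset" and t: "0 \<le> t" "t \<le> 1" and "t \<le> v"
  shows "alpha (Tbase t x) v = alpha x (v - t)"
proof (rule antisym)
  note Tx = apply_Tbase[OF x t]
  show "alpha (Tbase t x) v \<le> alpha x (v - t)"
  proof (rule alpha_least)
    fix s assume s: "Rep_omega s = -1 \<or> v \<le> Rep_omega s"
    then consider "s = pt (-1)" | "v \<le> Rep_omega s" by (metis pt_Rep_omega)
    then show "Tbase t x s \<le> alpha x (v - t)"
    proof cases
      case 1 then show ?thesis using alpha_upper[OF x, of "pt (-1)"] by (simp add: Tx Tbase_fun_minus_one)
    next
      case 2
      then have "Tbase t x s = x (pt (Rep_omega s - t))"
        using Tx Tbase_fun_shift[OF t(1), of "Rep_omega s" x] \<open>t \<le> v\<close> by (metis order_trans pt_Rep_omega)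
      then show ?thesis using alpha_upper[OF x, of "pt (Rep_omega s - t)" "v - t"] 2 \<open>t \<le> v\<close> by simp
    qed
  qed
  show "alpha x (v - t) \<le> alpha (Tbase t x) v"
  proof (rule alpha_least)
    fix s assume s: "Rep_omega s = -1 \<or> v - t \<le> Rep_omega s"
    then consider "s = pt (-1)" | u where "s = pt u" "0 \<le> u" "v - t \<le> u"
      by (metis omega_cases Rep_omega_pt_nonneg)
    then show "x s \<le> alpha (Tbase t x) v"
    proof cases
      case 1
      then show ?thesis
        using alpha_upper[OF Tbase_in_Cset[OF x t], of "pt (-1)" v] by (simp add: Tx Tbase_fun_minus_one)
    next
      case 2
      then have "x s = Tbase t x (pt (u + t))" by (simp add: Tx Tbase_fun_shift t)
      then show ?thesis using alpha_upper[OF Tbase_in_Cset[OF x t], of "pt (u + t)" v] 2 t by simp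
    qed
  qed
qed

lemma Tbase_fun_Tbase_gap:
  assumes x: "x \<in> Cset" and st: "0 \<le> s" "0 \<le> t" "s + t \<le> 1" and u: "0 \<le> u" "u \<le> s"
  shows "Tbase_fun s (Tbase t x) (pt u) = Tbase_fun (s + t) x (pt u)"
proof -
  let ?x0 = "x (pt 0)"
  let ?a = "1 - alpha x (1 - (s + t) + u)" and ?b = "1 - alpha x (1 - t)"
  have "Tbase t x (pt 0) = clip (?x0 - t) (?x0 + t) ?b"
    using st by (simp add: apply_Tbase[OF x] Tbase_fun_clip)
  moreover have "alpha (Tbase t x) (1 - s + u) = alpha x (1 - (s + t) + u)"
    using alpha_Tbase[OF x, of t "1 - s + u"] st u by (simp add: algebra_simps)
  \<comment> \<open>the value at 0 of \<open>T(t)x\<close> is itself a clamp, which \<open>clip_clip\<close> merges into the outer one\<close>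
  ultimately have "Tbase_fun s (Tbase t x) (pt u) =
      clip (clip (?x0 - t) (?x0 + t) ?b - (s - u)) (clip (?x0 - t) (?x0 + t) ?b + (s - u)) ?a"
    using u by (simp add: Tbase_fun_clip)
  also have "\<dots> = clip (?x0 - t - (s - u)) (?x0 + t + (s - u)) ?a"
  proof (rule clip_clip)
    show "?a \<le> ?b" using alpha_antimono[OF x, of "1 - (s + t) + u" "1 - t"] u by simp
    show "?b - ?a \<le> s - u"
      using alpha_lipschitz[OF x, of "1 - (s + t) + u" "1 - t"] st u by simp
  qed (use st u in auto)
  also have "\<dots> = Tbase_fun (s + t) x (pt u)"
    using st u by (simp add: Tbase_fun_clip algebra_simps)
  finally show ?thesis .
qed

lemma Tbase_Tbase:
  assumes x: "x \<in> Cset" and st: "0 \<le> s" "0 \<le> t" "s + t \<le> 1"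
  shows "Tbase s (Tbase t x) = Tbase (s + t) x"
proof (rule bcontfun_eqI)
  fix w
  have Tx: "apply_bcontfun (Tbase t x) = Tbase_fun t x" using apply_Tbase[OF x] st by simp
  have "Tbase_fun s (Tbase t x) w = Tbase_fun (s + t) x w"
  proof (cases w rule: omega_cases)
    case minus_one then show ?thesis by (simp add: Tbase_fun_minus_one Tx)
  next
    case (nonneg u)
    consider "s + t \<le> u" | "s \<le> u" "u \<le> s + t" | "u \<le> s" by linarith
    then show ?thesis
    proof cases
      case 1 then show ?thesis using st nonneg by (simp add: Tbase_fun_shift Tx diff_diff_eq)
    next
      case 2
      then have "Tbase_fun s (Tbase t x) w = Tbase_fun t x (pt (u - s))"
        using nonneg st by (simp add: Tbase_fun_shift Tx)
      also have "\<dots> = Tbase_fun (s + t) x w"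
        using 2 nonneg by (simp add: Tbase_fun_clip algebra_simps)
      finally show ?thesis .
    next
      case 3 then show ?thesis using Tbase_fun_Tbase_gap[OF x st] nonneg by simp
    qed
  qed
  then show "Tbase s (Tbase t x) w = Tbase (s + t) x w"
    using st by (simp add: apply_Tbase x Tbase_in_Cset)
qed

lemma Tbase_nonexpansive:
  assumes x: "x \<in> Cset" and y: "y \<in> Cset" and t: "0 \<le> t" "t \<le> 1"
  shows "norm (Tbase t x - Tbase t y) \<le> norm (x - y)"
proof (rule norm_bound)
  fix w
  have xy: "\<bar>x w' - y w'\<bar> \<le> norm (x - y)" for w'
    using norm_bounded[of "x - y" w'] by simp
  have "\<bar>Tbase_fun t x w - Tbase_fun t y w\<bar> \<le> norm (x - y)"
  proof (cases w rule: omega_cases)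
    case minus_one then show ?thesis using xy by (simp add: Tbase_fun_minus_one)
  next
    case (nonneg u)
    show ?thesis
    proof (cases "t \<le> u")
      case True then show ?thesis using nonneg xy t by (simp add: Tbase_fun_shift)
    next
      case False
      then show ?thesis
        using nonneg alpha_diff_le_norm[OF x y, of "1 - t + u"] xy[of "pt 0"]
        by (simp add: Tbase_fun_clip clip_abs_diff_le)
    qed
  qed
  then show "norm ((Tbase t x - Tbase t y) w) \<le> norm (x - y)"
    by (simp add: apply_Tbase[OF x t] apply_Tbase[OF y t])
qed

lemma norm_Tbase_diff_le:
  assumes x: "x \<in> Cset" and t: "0 \<le> t" "t \<le> 1"
  shows "norm (Tbase t x - x) \<le> t"
proof (rule norm_bound)
  fix w
  have "\<bar>Tbase_fun t x w - x w\<bar> \<le> t"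
  proof (cases w rule: omega_cases)
    case minus_one then show ?thesis using t by (simp add: Tbase_fun_minus_one)
  next
    case (nonneg u)
    show ?thesis
    proof (cases "t \<le> u")
      case True then show ?thesis using Cset_lipschitz[OF x, of "u - t" u] t nonneg by (simp add: Tbase_fun_shift)
    next
      case False
      then have "Tbase_fun t x w = clip (x (pt 0) - (t - u)) (x (pt 0) + (t - u)) (1 - alpha x (1 - t + u))"
        using nonneg by (simp add: Tbase_fun_clip)
      then show ?thesis
        using Cset_lipschitz[OF x, of u 0] nonneg False by (auto simp: clip_def abs_le_iff)
    qed
  qed
  then show "norm ((Tbase t x - x) w) \<le> t"
    by (simp add: apply_Tbase[OF x t])
qed

interpretation Tbase: nonexpansive_local_semigroup Cset Tbase
  by unfold_locales (simp_all add: Tbase_in_Cset Tbase_Tbase Tbase_nonexpansive norm_Tbase_diff_le)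

lemma Tsg_eq_extension: "x \<in> Cset \<Longrightarrow> 0 \<le> t \<Longrightarrow> Tsg t x = semigroup_extension Tbase t x"
  by (simp add: Tsg_def semigroup_extension_def[symmetric] Tbase.extension_eq)

lemma nonexp_semigroup_cong:
  assumes "\<And>t x. 0 \<le> t \<Longrightarrow> x \<in> C \<Longrightarrow> T t x = T' t x" and "nonexp_semigroup C T'"
  shows "nonexp_semigroup C T"
proof -
  have "continuous_on {0..} (\<lambda>t. T t x) \<longleftrightarrow> continuous_on {0..} (\<lambda>t. T' t x)" if "x \<in> C" for x
    by (intro continuous_on_cong refl) (simp add: assms(1) that)
  with assms show ?thesis by (simp add: nonexp_semigroup_def)
qed

lemma nonexp_semigroup_Tsg: "nonexp_semigroup Cset Tsg"
  by (rule nonexp_semigroup_cong[OF Tsg_eq_extension Tbase.nonexp_semigroup_extension])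

lemma Tsg_integrable:
  assumes "x \<in> Cset" shows "(\<lambda>s. Tsg s x) integrable_on {0..t}"
proof -
  have "continuous_on {0..} (\<lambda>s. Tsg s x)"
    using nonexp_semigroup_Tsg assms unfolding nonexp_semigroup_def by blast
  then have "continuous_on {0..t} (\<lambda>s. Tsg s x)" by (rule continuous_on_subset) auto
  then show ?thesis by (rule integrable_continuous_interval)
qed

section \<open>The orbit of 0\<close>

definition tent_fun :: "real \<Rightarrow> omega \<Rightarrow> real" where
  "tent_fun s w = (if Rep_omega w = -1 then 0 else max 0 (1 - \<bar>Rep_omega w - (s - 1)\<bar>))"

definition tent :: "real \<Rightarrow> E" where
  "tent s = Bcontfun (tent_fun s)"

lemma C_function_tent_fun: "C_function (tent_fun s)"
  unfolding C_function_def
proof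
  show "range (tent_fun s) \<subseteq> {0..1}" by (auto simp: tent_fun_def)
  show "1-lipschitz_on {0..} (tent_fun s \<circ> pt)"
  proof (rule lipschitz_onI)
    fix a b :: real assume "a \<in> {0..}" "b \<in> {0..}"
    then show "dist ((tent_fun s \<circ> pt) a) ((tent_fun s \<circ> pt) b) \<le> 1 * dist a b"
      by (simp add: tent_fun_def dist_real_def abs_if max_def split: if_splits)
  qed simp
qed

lemma apply_tent: "apply_bcontfun (tent s) = tent_fun s"
  by (simp add: tent_def apply_Bcontfun_C_function C_function_tent_fun)

lemma tent_in_Cset: "tent s \<in> Cset"
  by (simp add: tent_def Bcontfun_in_Cset C_function_tent_fun)

lemma tent_zero: "tent 0 = 0"
proof (rule bcontfun_eqI)
  fix w show "tent 0 w = (0::E) w"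
    by (cases w rule: omega_cases) (auto simp: apply_tent tent_fun_def)
qed

lemma alpha_tent:
  assumes "0 \<le> v" shows "alpha (tent s) v = max 0 (min 1 (s - v))"
proof (rule antisym)
  show "alpha (tent s) v \<le> max 0 (min 1 (s - v))"
    by (rule alpha_least) (auto simp: apply_tent tent_fun_def)
  show "max 0 (min 1 (s - v)) \<le> alpha (tent s) v"
  proof (cases "s - v \<le> 0")
    case True then show ?thesis using alpha_bounds[OF tent_in_Cset, of s v] by simp
  next
    case False
    define u where "u = max v (s - 1)"
    have "0 \<le> u" "v \<le> u" using assms by (auto simp: u_def)
    then have "tent s (pt u) \<le> alpha (tent s) v" using alpha_upper[OF tent_in_Cset, of "pt u" v] by simp
    moreover have "tent s (pt u) = max 0 (min 1 (s - v))"
      using \<open>0 \<le> u\<close> False by (auto simp: apply_tent tent_fun_def u_def)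
    ultimately show ?thesis by simp
  qed
qed

lemma Tbase_tent:
  assumes s: "0 \<le> s" and h: "0 \<le> h" "h \<le> 1"
  shows "Tbase h (tent s) = tent (s + h)"
proof (rule bcontfun_eqI)
  fix w
  have "Tbase_fun h (tent s) w = tent_fun (s + h) w"
  proof (cases w rule: omega_cases)
    case minus_one then show ?thesis by (simp add: Tbase_fun_minus_one apply_tent tent_fun_def)
  next
    case (nonneg u)
    show ?thesis
    proof (cases "h \<le> u")
      case True then show ?thesis using h nonneg by (simp add: Tbase_fun_shift apply_tent tent_fun_def algebra_simps)
    next
      case False
      then show ?thesis
        using alpha_tent[of "1 - h + u" s] s h nonneg
        by (simp add: Tbase_fun_clip apply_tent tent_fun_def clip_def)
    qed
  qed
  then show "Tbase h (tent s) w = tent (s + h) w"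
    by (simp add: apply_Tbase[OF tent_in_Cset h] apply_tent)
qed

lemma Tsg_zero_eq_tent: "0 \<le> s \<Longrightarrow> Tsg s 0 = tent s"
  using semigroup_extension_orbit[of Tbase tent s] Tbase_tent tent_in_Cset
  by (simp add: Tsg_eq_extension tent_zero[symmetric])

lemma tent_fun_integrable: "(\<lambda>s. tent_fun s w) integrable_on {a..b}"
  by (cases "Rep_omega w = -1")
    (simp_all add: tent_fun_def integrable_continuous_interval continuous_intros)

lemma integral_tent_fun_le:
  assumes "0 \<le> t" shows "integral {0..t} (\<lambda>s. tent_fun s w) \<le> 2"
proof (cases "Rep_omega w = -1")
  case True then show ?thesis by (simp add: tent_fun_def)
next
  case False
  define u where "u = Rep_omega w"
  let ?ind = "\<lambda>s::real. if s \<in> {u..u + 2} then 1 else 0 :: real"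
  have "?ind integrable_on {0..t}"
    unfolding integrable_restrict_Int Int_atLeastAtMost by (rule integrable_const_ivl)
  with tent_fun_integrable have "integral {0..t} (\<lambda>s. tent_fun s w) \<le> integral {0..t} ?ind"
    by (rule integral_le) (auto simp: tent_fun_def u_def[symmetric] False)
  also have "\<dots> = (if max u 0 \<le> min (u + 2) t then min (u + 2) t - max u 0 else 0)"
    unfolding integral_restrict_Int Int_atLeastAtMost by simp
  also have "\<dots> \<le> 2" using Rep_omega[of w] False by (auto simp: u_def min_def max_def)
  finally show ?thesis .
qed

lemma norm_integral_orbit_le:
  assumes "0 \<le> t" shows "norm (integral {0..t} (\<lambda>s. Tsg s 0)) \<le> 2"
proof (rule norm_bound)
  fix w
  have "integral {0..t} (\<lambda>s. Tsg s 0) w = integral {0..t} (\<lambda>s. Tsg s 0 w)"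
    by (rule apply_integral_bcontfun[OF Tsg_integrable[OF zero_in_Cset]])
  also have "\<dots> = integral {0..t} (\<lambda>s. tent_fun s w)"
    by (rule integral_cong) (simp add: Tsg_zero_eq_tent apply_tent)
  finally have "integral {0..t} (\<lambda>s. Tsg s 0) w = integral {0..t} (\<lambda>s. tent_fun s w)" .
  moreover have "0 \<le> integral {0..t} (\<lambda>s. tent_fun s w)"
    by (rule integral_nonneg[OF tent_fun_integrable]) (simp add: tent_fun_def)
  ultimately show "norm (integral {0..t} (\<lambda>s. Tsg s 0) w) \<le> 2"
    using integral_tent_fun_le[OF assms] by simp
qed

theorem mainTheorem1:
  shows "closed Cset \<and> convex Cset \<and> nonexp_semigroup Cset Tsg \<and>
         (0::E) \<in> Cset \<and> \<not> common_fixed_point Cset Tsg 0 \<and>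
         (\<forall>t\<ge>0. (\<lambda>s. Tsg s 0) integrable_on {0..t}) \<and>
         ((\<lambda>t. norm ((1 / t) *\<^sub>R integral {0..t} (\<lambda>s. Tsg s 0) - 0)) \<longlongrightarrow> 0) at_top"
proof (intro conjI allI impI closed_Cset convex_Cset nonexp_semigroup_Tsg zero_in_Cset
    Tsg_integrable[OF zero_in_Cset])
  have "Tsg 1 0 (pt 0) = 1" by (simp add: Tsg_zero_eq_tent apply_tent tent_fun_def)
  then have "Tsg 1 0 \<noteq> 0" by auto
  then show "\<not> common_fixed_point Cset Tsg 0"
    unfolding common_fixed_point_def by (metis zero_le_one)
  have "\<forall>\<^sub>F t in at_top. norm (norm ((1 / t) *\<^sub>R integral {0..t} (\<lambda>s. Tsg s 0) - 0)) \<le> 2 / t"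
    using eventually_gt_at_top[of 0]
    by eventually_elim (simp add: divide_right_mono norm_integral_orbit_le)
  then show "((\<lambda>t. norm ((1 / t) *\<^sub>R integral {0..t} (\<lambda>s. Tsg s 0) - 0)) \<longlongrightarrow> 0) at_top"
    by (rule Lim_null_comparison)
      (intro tendsto_divide_0[OF tendsto_const] filterlim_at_top_imp_at_infinity filterlim_ident)
qed

end
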